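(* Let $(X,\mathcal{A},\mu,T)$ be an ergodic probability preserving system, $(A_l)$ and $(A_l')$ two asymptotically rare sequences in $\mathcal{A}$, and $(\psi_{A_l})$, $(\psi'_{A_l'})$ two sequences of $\mathfrak{F}$-valued local observables for the sets $A_l$ and $A_l'$, respectively. Assume that $\mu(A_l\triangle A_l')=o(\mu(A_l))$ as $l\to\infty$, and that $d_{\mathfrak{F}}(\psi_{A_l},\psi'_{A_l'})\to0$ in $\mu_{A_l\cap A_l'}$-probability as $l\to\infty$. Then for any random sequence $\widetilde\Psi$ in $\mathfrak{F}$, $$\widetilde\Psi_{A_l}\overset{\mu_{A_l}}{\Longrightarrow}\widetilde\Psi\quad\text{iff}\quad\widetilde\Psi'_{A_l'}\overset{\mu_{A_l'}}{\Longrightarrow}\widetilde\Psi,$$ where $\widetilde\Psi_{A_l}$ and $\widetilde\Psi'_{A_l'}$ are the local processes given by $\psi_{A_l}$ and $\psi'_{A_l'}$, respectively.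
   Context: $(\mathfrak{F},d_{\mathfrak{F}})$ compact metric space; $T$ ergodic preserving the probability $\mu$. For $A$ with $\mu(A)>0$: $\varphi_A(x):=\inf\{n\ge1:T^nx\in A\}$, $T_Ax:=T^{\varphi_A(x)}x$, $\mu_A:=\mu(A\cap\cdot)/\mu(A)$. Asymptotically rare: $0<\mu(A_l)\to0$. Local observable: measurable $\psi_A:A\to\mathfrak{F}$, with $\widetilde\Psi_A:=(\psi_A,\psi_A\circ T_A,\psi_A\circ T_A^2,\ldots):A\to\mathfrak{F}^{\mathbb{N}_0}$ (product topology). $\overset{\nu}{\Longrightarrow}$: weak convergence of laws under $\nu$. *)

theory Defs
  imports "HOL-Probability.Probability"
begin

definition ergodic_pps :: "'a measure \<Rightarrow> ('a \<Rightarrow> 'a) \<Rightarrow> bool" where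
  "ergodic_pps M T \<longleftrightarrow>
     prob_space M \<and> T \<in> measurable M M \<and>
     (\<forall>E\<in>sets M. emeasure M (T -` E \<inter> space M) = emeasure M E) \<and>
     (\<forall>E\<in>sets M. T -` E \<inter> space M = E \<longrightarrow> measure M E = 0 \<or> measure M E = 1)"

text \<open>First return time to A (value 0 where x never enters A at times n >= 1;
  this is the null set where the paper's infimum is infinite).\<close>
definition return_time :: "('a \<Rightarrow> 'a) \<Rightarrow> 'a set \<Rightarrow> 'a \<Rightarrow> nat" where
  "return_time T A x =
     (if \<exists>n\<ge>1. (T ^^ n) x \<in> A then (LEAST n. n \<ge> 1 \<and> (T ^^ n) x \<in> A) else 0)"

definition induced_map :: "('a \<Rightarrow> 'a) \<Rightarrow> 'a set \<Rightarrow> 'a \<Rightarrow> 'a" where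
  "induced_map T A x = (T ^^ return_time T A x) x"

definition local_process ::
    "('a \<Rightarrow> 'a) \<Rightarrow> 'a set \<Rightarrow> ('a \<Rightarrow> 'f) \<Rightarrow> 'a \<Rightarrow> (nat \<Rightarrow> 'f)" where
  "local_process T A \<psi> x = (\<lambda>k. \<psi> ((induced_map T A ^^ k) x))"

definition cond_measure :: "'a measure \<Rightarrow> 'a set \<Rightarrow> 'a measure" where
  "cond_measure M A = uniform_measure (restrict_space M A) A"

definition weak_conv_to :: "(nat \<Rightarrow> 'b::topological_space measure) \<Rightarrow> 'b measure \<Rightarrow> bool" where
  "weak_conv_to Ps P \<longleftrightarrow>
     (\<forall>f :: 'b \<Rightarrow> real. continuous_on UNIV f \<and> bounded (range f) \<longrightarrow>
        (\<lambda>n. integral\<^sup>L (Ps n) f) \<longlonglongrightarrow> integral\<^sup>L P f)"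

definition local_law ::
    "'a measure \<Rightarrow> ('a \<Rightarrow> 'a) \<Rightarrow> 'a set \<Rightarrow> ('a \<Rightarrow> 'f::topological_space) \<Rightarrow> (nat \<Rightarrow> 'f) measure" where
  "local_law M T A \<psi> = distr (cond_measure M A) borel (local_process T A \<psi>)"

definition asymptotically_rare :: "'a measure \<Rightarrow> (nat \<Rightarrow> 'a set) \<Rightarrow> bool" where
  "asymptotically_rare M A \<longleftrightarrow>
     (\<forall>l. A l \<in> sets M \<and> measure M (A l) > 0) \<and> (\<lambda>l. measure M (A l)) \<longlonglongrightarrow> 0"

end

theory Submission
  imports Defs
begin

(*
  Put U = A \<union> A' and let T_U be the first return map of U. If x \<in> A \<inter> A' and its first K + 1
  iterates under T_U avoid the symmetric difference A \<triangle> A', then they are also its first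
  K + 1 iterates under T_A and under T_A'; if moreover they avoid the set where \<psi> and \<psi>' are
  more than \<eta> apart, the two local processes at x are \<eta>-close in their first K + 1
  coordinates, so a bounded continuous F on the compact product space takes nearly equal
  values on them. By invariance of \<mu>, \<mu>(T_U\<^sup>-\<^sup>1 E \<inter> U) \<le> 2 \<mu>(E), so the exceptional points
  have measure O(\<mu>(A \<triangle> A') + \<mu>{d(\<psi>, \<psi>') > \<eta>}), which is o(\<mu>(A)) by hypothesis. Hence the
  integrals of F against the two laws differ by o(1), and the two sequences of laws have the
  same weak limits.
*)

section \<open>The sequence space\<close>

lemma compact_UNIV_nat_fun:
  assumes "compact (UNIV :: 'f::metric_space set)"
  shows "compact (UNIV :: (nat \<Rightarrow> 'f) set)"
proof -
  have "compact_space (euclidean :: 'f topology)"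
    using assms by (simp add: compact_space_def compactin_euclidean_iff)
  then have "compact_space (product_topology (\<lambda>i::nat. euclidean :: 'f topology) UNIV)"
    by (simp add: compact_space_product_topology)
  then show ?thesis
    by (simp add: euclidean_product_topology compact_space_def compactin_euclidean_iff)
qed

lemma open_eq_countable_Union_balls:
  fixes S :: "'b::metric_space set"
  assumes "compact (UNIV :: 'b set)" and "open S"
  obtains C :: "('b \<times> real) set" where "countable C" and "S = (\<Union>(c, r)\<in>C. ball c r)"
proof -
  have "\<forall>n::nat. \<exists>N. finite N \<and> (UNIV :: 'b set) \<subseteq> (\<Union>c\<in>N. ball c (1 / Suc n))"
    using assms(1) unfolding compact_eq_totally_bounded by auto
  then obtain N where N: "\<And>n. finite (N n)" "\<And>n. (UNIV :: 'b set) \<subseteq> (\<Union>c\<in>N n. ball c (1 / Suc n))"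
    by metis
  define C where "C = (\<Union>n. (\<lambda>c. (c, 1 / Suc n)) ` {c \<in> N n. ball c (1 / Suc n) \<subseteq> S})"
  have "countable C"
    unfolding C_def using N(1) by (simp add: countable_finite)
  moreover have "S = (\<Union>(c, r)\<in>C. ball c r)"
  proof
    show "(\<Union>(c, r)\<in>C. ball c r) \<subseteq> S" unfolding C_def by auto
    show "S \<subseteq> (\<Union>(c, r)\<in>C. ball c r)"
    proof
      fix y assume "y \<in> S"
      then obtain e where e: "e > 0" "ball y e \<subseteq> S" using assms(2) open_contains_ball by blast
      obtain n :: nat where "inverse (Suc n) < e / 2" using reals_Archimedean e by (metis half_gt_zero)
      then have n: "2 / Suc n < e" by (simp add: field_simps)
      obtain c where c: "c \<in> N n" "y \<in> ball c (1 / Suc n)" using N(2)[of n] by blast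
      have "ball c (1 / Suc n) \<subseteq> ball y e"
      proof
        fix z assume "z \<in> ball c (1 / Suc n)"
        then have "dist y z < 2 / Suc n" using c(2) dist_triangle[of y z c] by (simp add: dist_commute)
        then show "z \<in> ball y e" using n by simp
      qed
      then show "y \<in> (\<Union>(c, r)\<in>C. ball c r)" unfolding C_def using c e by blast
    qed
  qed
  ultimately show ?thesis using that by blast
qed

text \<open>\<open>'f\<close> is only a metric space, so the library does not identify the Borel sets of
  \<open>nat \<Rightarrow> 'f\<close> with the product \<sigma>-algebra; instead, by total boundedness every open set is a
  countable union of balls.\<close>
lemma borel_measurable_nat_fun:
  fixes g :: "nat \<Rightarrow> 'a \<Rightarrow> 'f::metric_space"
  assumes "compact (UNIV :: 'f set)" and g: "\<And>k. g k \<in> borel_measurable N"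
  shows "(\<lambda>x k. g k x) \<in> borel_measurable N"
proof (rule borel_measurableI)
  fix S :: "(nat \<Rightarrow> 'f) set" assume "open S"
  obtain C where C: "countable C" "S = (\<Union>(c, r)\<in>C. ball c r)"
    using open_eq_countable_Union_balls[OF compact_UNIV_nat_fun[OF assms(1)] \<open>open S\<close>] .
  have ball: "(\<lambda>x k. g k x) -` ball c r \<inter> space N \<in> sets N" for c r
  proof -
    have "(\<lambda>x. dist (c k) (g k x)) \<in> borel_measurable N" for k
      using measurable_compose[OF g borel_measurable_continuous_onI[of "dist (c k)"]]
      by (simp add: continuous_on_dist)
    then have "(\<lambda>x. (1/2)^n * min (dist (c (from_nat n)) (g (from_nat n) x)) 1) \<in> borel_measurable N" for n
      by measurable
    then have "(\<lambda>x. dist c (\<lambda>k. g k x)) \<in> borel_measurable N"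
      unfolding dist_fun_def by measurable
    then have "{x \<in> space N. dist c (\<lambda>k. g k x) < r} \<in> sets N" by measurable
    moreover have "(\<lambda>x k. g k x) -` ball c r \<inter> space N = {x \<in> space N. dist c (\<lambda>k. g k x) < r}"
      by auto
    ultimately show ?thesis by simp
  qed
  have "(\<lambda>x k. g k x) -` S \<inter> space N = (\<Union>(c, r)\<in>C. (\<lambda>x k. g k x) -` ball c r \<inter> space N)"
    using C(2) by auto
  also have "\<dots> \<in> sets N"
    using C(1) ball by (intro sets.countable_UN'') auto
  finally show "(\<lambda>x k. g k x) -` S \<inter> space N \<in> sets N" .
qed

lemma dist_gt_in_sets:
  fixes \<phi> \<phi>' :: "'a \<Rightarrow> 'f::metric_space"
  assumes "compact (UNIV :: 'f set)" and S: "S \<in> sets N"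
    and "\<phi> \<in> borel_measurable (restrict_space N S)" and "\<phi>' \<in> borel_measurable (restrict_space N S)"
  shows "{x \<in> S. dist (\<phi> x) (\<phi>' x) > \<eta>} \<in> sets N"
proof -
  define g where "g k = (if k = (0::nat) then \<phi> else \<phi>')" for k
  have "(\<lambda>x k. g k x) \<in> borel_measurable (restrict_space N S)"
    using assms(3,4) by (intro borel_measurable_nat_fun[OF assms(1)]) (simp add: g_def)
  moreover have "continuous_on UNIV (\<lambda>y::nat \<Rightarrow> 'f. dist (y 0) (y 1))"
    by (intro continuous_on_dist continuous_on_product_coordinates)
  ultimately have "(\<lambda>x. (\<lambda>y. dist (y 0) (y 1)) (\<lambda>k. g k x)) \<in> borel_measurable (restrict_space N S)"
    by (rule measurable_compose[OF _ borel_measurable_continuous_onI])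
  then have "(\<lambda>x. dist (\<phi> x) (\<phi>' x)) \<in> borel_measurable (restrict_space N S)"
    by (simp add: g_def)
  then have "{x \<in> space (restrict_space N S). dist (\<phi> x) (\<phi>' x) > \<eta>} \<in> sets (restrict_space N S)"
    by measurable
  then show ?thesis using S by (simp add: sets_restrict_space_iff)
qed

lemma dist_nat_fun_less_if_initial_coordinates_close:
  assumes "e > 0"
  shows "\<exists>d>0. \<exists>K. \<forall>y z :: nat \<Rightarrow> 'f::metric_space. (\<forall>k\<le>K. dist (y k) (z k) \<le> d) \<longrightarrow> dist y z < e"
proof -
  obtain N where N: "(1/2::real)^N < e/2" using real_arch_pow_inv[of "e/2" "1/2"] assms by auto
  define K where "K = Max ((from_nat :: nat \<Rightarrow> nat) ` {..N})"
  have K: "from_nat n \<le> K" if "n \<le> N" for n :: nat unfolding K_def using that by (intro Max_ge) auto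
  show ?thesis
  proof (intro exI[of _ "e/8"] conjI exI[of _ K] allI impI)
    fix y z :: "nat \<Rightarrow> 'f" assume yz: "\<forall>k\<le>K. dist (y k) (z k) \<le> e/8"
    have "{dist (y (from_nat n)) (z (from_nat n)) |n. n \<le> N} = (\<lambda>n. dist (y (from_nat n)) (z (from_nat n))) ` {..N}"
      by auto
    moreover have "Max ((\<lambda>n. dist (y (from_nat n)) (z (from_nat n))) ` {..N}) \<le> e/8"
      using yz K by (subst Max_le_iff) auto
    ultimately have "Max {dist (y (from_nat n)) (z (from_nat n)) |n. n \<le> N} \<le> e/8" by simp
    then have "dist y z \<le> 2 * (e/8) + (1/2)^N"
      using dist_fun_le_dist_first_terms[of y z N] by linarith
    then show "dist y z < e" using N assms by linarith
  qed (use assms in simp)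
qed

lemma uniformly_continuous_initial_coordinates:
  fixes F :: "(nat \<Rightarrow> 'f::metric_space) \<Rightarrow> real"
  assumes "compact (UNIV :: 'f set)" and "continuous_on UNIV F" and "e > 0"
  obtains d K where "d > 0"
    and "\<And>y z. (\<forall>k\<le>K. dist (y k) (z k) \<le> d) \<Longrightarrow> \<bar>F y - F z\<bar> < e"
proof -
  have "uniformly_continuous_on UNIV F"
    using compact_uniformly_continuous[OF assms(2) compact_UNIV_nat_fun[OF assms(1)]] .
  then obtain d where d: "d > 0" "\<And>y z. dist y z < d \<Longrightarrow> dist (F y) (F z) < e"
    unfolding uniformly_continuous_on_def using assms(3) by blast
  obtain d' K where "d' > 0" "\<forall>y z :: nat \<Rightarrow> 'f. (\<forall>k\<le>K. dist (y k) (z k) \<le> d') \<longrightarrow> dist y z < d"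
    using dist_nat_fun_less_if_initial_coordinates_close[OF d(1)] by metis
  with d(2) show ?thesis using that[of d' K] by (simp add: dist_real_def)
qed

section \<open>Conditional measures\<close>

lemma measure_cond_measure:
  assumes "finite_measure M" and A: "A \<in> sets M" and "measure M A > 0"
    and D: "D \<in> sets M" "D \<subseteq> A"
  shows "measure (cond_measure M A) D = measure M D / measure M A"
proof -
  have "emeasure (restrict_space M A) A = ennreal (measure M A)"
    using A by (simp add: emeasure_restrict_space finite_measure.emeasure_eq_measure[OF assms(1)])
  moreover have "D \<in> sets (restrict_space M A)" using D A by (auto simp: sets_restrict_space_iff)
  ultimately have "measure (cond_measure M A) D = measure (restrict_space M A) (A \<inter> D) / measure (restrict_space M A) A"
    unfolding cond_measure_def using assms(3) by (intro measure_uniform_measure) auto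
  then show ?thesis
    using D A by (simp add: measure_restrict_space Int_absorb1)
qed

lemma integral_cond_measure:
  fixes g :: "'a \<Rightarrow> real"
  assumes fm: "finite_measure M" and A: "A \<in> sets M" and pos: "measure M A > 0"
    and g: "g \<in> borel_measurable (restrict_space M A)"
  shows "integral\<^sup>L (cond_measure M A) g = (\<integral>x. indicator A x * g x \<partial>M) / measure M A"
proof -
  let ?N = "restrict_space M A"
  have "emeasure ?N A = ennreal (measure M A)"
    using A by (simp add: emeasure_restrict_space finite_measure.emeasure_eq_measure[OF fm])
  then have dens: "(\<lambda>x. indicator A x / emeasure ?N A) = (\<lambda>x. ennreal (indicator A x / measure M A))"
    using pos divide_ennreal[of 1 "measure M A"] by (auto simp: indicator_def)
  have "integral\<^sup>L (cond_measure M A) g = integral\<^sup>L (density ?N (\<lambda>x. ennreal (indicator A x / measure M A))) g"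
    unfolding cond_measure_def uniform_measure_def dens ..
  also have "\<dots> = integral\<^sup>L ?N (\<lambda>x. (indicator A x / measure M A) *\<^sub>R g x)"
  proof (rule integral_density[OF g])
    have "(\<lambda>x. indicator A x :: real) \<in> borel_measurable ?N"
      using A by (intro borel_measurable_indicator') (auto simp: sets_restrict_space_iff space_restrict_space)
    then show "(\<lambda>x. indicator A x / measure M A) \<in> borel_measurable ?N" by measurable
  qed (use pos in auto)
  also have "\<dots> = (\<integral>x. indicator A x *\<^sub>R ((indicator A x / measure M A) *\<^sub>R g x) \<partial>M)"
    using A by (intro integral_restrict_space) (auto simp: Int_absorb2 sets.sets_into_space)
  also have "\<dots> = (\<integral>x. (indicator A x * g x) / measure M A \<partial>M)"
    by (intro Bochner_Integration.integral_cong) (auto simp: indicator_def)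
  also have "\<dots> = (\<integral>x. indicator A x * g x \<partial>M) / measure M A"
    by simp
  finally show ?thesis .
qed

lemma measure_divide_le_measure_cond_measure:
  assumes "finite_measure M" and "A \<in> sets M" "C \<in> sets M" "D \<in> sets M"
    and "D \<subseteq> C" "C \<subseteq> A" and "measure M A > 0"
  shows "measure M D / measure M A \<le> measure (cond_measure M C) D"
proof (cases "measure M C > 0")
  case True
  then have "measure M D / measure M A \<le> measure M D / measure M C"
    using assms by (intro divide_left_mono finite_measure.finite_measure_mono) auto
  then show ?thesis using measure_cond_measure[OF assms(1,3) True assms(4,5)] by simp
next
  case False
  then have "measure M D = 0"
    using finite_measure.finite_measure_mono[OF assms(1,5,3)] measure_nonneg[of M D] measure_nonneg[of M C]
    by linarith
  then show ?thesis by simp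
qed

section \<open>First return maps\<close>

lemma measurable_funpow: "f \<in> measurable M M \<Longrightarrow> f ^^ n \<in> measurable M M"
  by (induction n) (simp_all add: measurable_ident measurable_compose)

lemma measurable_return_time:
  assumes [measurable]: "T \<in> measurable M M" "U \<in> sets M"
  shows "return_time T U \<in> measurable M (count_space UNIV)"
proof -
  note measurable_funpow[OF assms(1), measurable]
  show ?thesis unfolding return_time_def by measurable
qed

lemma measurable_induced_map:
  "T \<in> measurable M M \<Longrightarrow> U \<in> sets M \<Longrightarrow> induced_map T U \<in> measurable M M"
  unfolding induced_map_def
  by (rule measurable_compose_countable[OF measurable_funpow measurable_return_time])

lemma vimage_funpow_induced_map_Int_in_sets:
  assumes "T \<in> measurable M M" "U \<in> sets M" "E \<in> sets M"
  shows "(induced_map T U ^^ k) -` E \<inter> U \<in> sets M"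
proof -
  have "(induced_map T U ^^ k) -` E \<inter> U = ((induced_map T U ^^ k) -` E \<inter> space M) \<inter> U"
    using sets.sets_into_space[OF assms(2)] by auto
  then show ?thesis
    using measurable_sets[OF measurable_funpow[OF measurable_induced_map] assms(3)] assms by auto
qed

lemma induced_map_in: "x \<in> U \<Longrightarrow> induced_map T U x \<in> U"
  unfolding induced_map_def return_time_def by (auto intro: LeastI2_ex)

lemma funpow_induced_map_in: "x \<in> U \<Longrightarrow> (induced_map T U ^^ k) x \<in> U"
  by (induction k) (auto intro: induced_map_in)

lemma induced_map_eq_if_subset:
  assumes "A \<subseteq> U" and "induced_map T U y \<in> A"
  shows "induced_map T A y = induced_map T U y"
proof (cases "\<exists>n\<ge>1. (T ^^ n) y \<in> U")
  case True
  define n where "n = (LEAST n. n \<ge> 1 \<and> (T ^^ n) y \<in> U)"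
  have n: "n \<ge> 1" "(T ^^ n) y \<in> U" unfolding n_def using True by (auto intro: LeastI2_ex)
  have "induced_map T U y = (T ^^ n) y"
    unfolding induced_map_def return_time_def n_def using True by simp
  with assms(2) have "(T ^^ n) y \<in> A" by simp
  moreover have "(LEAST m. m \<ge> 1 \<and> (T ^^ m) y \<in> A) = n"
  proof (rule Least_equality)
    show "1 \<le> n \<and> (T ^^ n) y \<in> A" using n \<open>(T ^^ n) y \<in> A\<close> by simp
    show "\<And>m. 1 \<le> m \<and> (T ^^ m) y \<in> A \<Longrightarrow> n \<le> m"
      unfolding n_def using assms(1) by (auto intro: Least_le)
  qed
  ultimately show ?thesis
    using n True unfolding induced_map_def return_time_def n_def by auto
next
  case False
  then have "\<not> (\<exists>n\<ge>1. (T ^^ n) y \<in> A)" using assms(1) by auto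
  with False have "return_time T A y = 0" "return_time T U y = 0"
    unfolding return_time_def by (simp_all only: if_False)
  then show ?thesis unfolding induced_map_def by simp
qed

lemma funpow_induced_map_eq_if_subset:
  assumes "A \<subseteq> U" and "\<forall>j\<le>K. (induced_map T U ^^ j) x \<in> A" and "k \<le> K"
  shows "(induced_map T A ^^ k) x = (induced_map T U ^^ k) x"
  using assms(3)
proof (induction k)
  case (Suc k)
  then have "induced_map T U ((induced_map T U ^^ k) x) \<in> A"
    using assms(2)[rule_format, OF Suc.prems] by simp
  then show ?case using Suc induced_map_eq_if_subset[OF assms(1)] by simp
qed simp

definition first_return_into :: "('a \<Rightarrow> 'a) \<Rightarrow> 'a set \<Rightarrow> 'a set \<Rightarrow> nat \<Rightarrow> 'a set" where
  "first_return_into T U E n =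
     {x \<in> U. 0 < n \<and> (\<forall>j. 0 < j \<and> j < n \<longrightarrow> (T ^^ j) x \<notin> U) \<and> (T ^^ n) x \<in> E}"

lemma first_return_into_in_sets:
  assumes [measurable]: "T \<in> measurable M M" "U \<in> sets M" "E \<in> sets M"
  shows "first_return_into T U E n \<in> sets M"
proof -
  note measurable_funpow[OF assms(1), measurable]
  have "first_return_into T U E n =
      {x \<in> space M. x \<in> U \<and> 0 < n \<and> (\<forall>j. 0 < j \<and> j < n \<longrightarrow> (T ^^ j) x \<notin> U) \<and> (T ^^ n) x \<in> E}"
    using sets.sets_into_space[OF assms(2)] unfolding first_return_into_def by auto
  also have "\<dots> \<in> sets M" by measurable
  finally show ?thesis .
qed

lemma vimage_induced_map_subset:
  "induced_map T U -` E \<inter> U \<subseteq> E \<union> (\<Union>n. first_return_into T U E n)"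
proof
  fix x assume x: "x \<in> induced_map T U -` E \<inter> U"
  show "x \<in> E \<union> (\<Union>n. first_return_into T U E n)"
  proof (cases "\<exists>n\<ge>1. (T ^^ n) x \<in> U")
    case False
    then have "return_time T U x = 0" unfolding return_time_def by (simp only: if_False)
    then show ?thesis using x unfolding induced_map_def by auto
  next
    case True
    define n where "n = (LEAST n. n \<ge> 1 \<and> (T ^^ n) x \<in> U)"
    have "n \<ge> 1" unfolding n_def using True by (auto intro: LeastI2_ex)
    moreover have "(T ^^ j) x \<notin> U" if "0 < j" "j < n" for j
      using not_less_Least[of j "\<lambda>n. n \<ge> 1 \<and> (T ^^ n) x \<in> U"] that unfolding n_def by auto
    moreover have "induced_map T U x = (T ^^ n) x"
      unfolding induced_map_def return_time_def n_def using True by simp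
    ultimately have "x \<in> first_return_into T U E n" using x unfolding first_return_into_def by auto
    then show ?thesis by blast
  qed
qed

lemma first_return_into_funpow_disjoint:
  assumes "n < m" "m \<le> N"
    and "(T ^^ (N - n)) x \<in> first_return_into T U E n"
    and "(T ^^ (N - m)) x \<in> first_return_into T U E m"
  shows False
proof -
  let ?y = "(T ^^ (N - m)) x"
  have "(T ^^ (m - n)) ?y = (T ^^ (N - n)) x"
    using assms(1,2) by (simp add: funpow_add[symmetric, THEN fun_cong, simplified])
  moreover have "(T ^^ (m - n)) ?y \<notin> U" "(T ^^ (N - n)) x \<in> U"
    using assms unfolding first_return_into_def by auto
  ultimately show False by simp
qed

section \<open>Preimages under first return maps\<close>

locale mpt = prob_space M for M :: "'a measure" +
  fixes T :: "'a \<Rightarrow> 'a"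
  assumes T_measurable: "T \<in> measurable M M"
    and T_preserving: "\<And>E. E \<in> sets M \<Longrightarrow> emeasure M (T -` E \<inter> space M) = emeasure M E"

lemma mpt_if_ergodic_pps: "ergodic_pps M T \<Longrightarrow> mpt M T"
  unfolding ergodic_pps_def mpt_def mpt_axioms_def by blast

context mpt
begin

lemma emeasure_vimage_funpow:
  "E \<in> sets M \<Longrightarrow> emeasure M ((T ^^ n) -` E \<inter> space M) = emeasure M E"
proof (induction n arbitrary: E)
  case 0
  then show ?case using sets.sets_into_space by (simp add: Int_absorb2)
next
  case (Suc n)
  have eq: "(T ^^ Suc n) -` E \<inter> space M = T -` ((T ^^ n) -` E \<inter> space M) \<inter> space M"
    using measurable_space[OF T_measurable] by (auto simp: funpow_Suc_right simp del: funpow.simps)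
  have "(T ^^ n) -` E \<inter> space M \<in> sets M"
    using measurable_funpow[OF T_measurable] Suc.prems by (rule measurable_sets)
  then show ?case unfolding eq by (simp only: T_preserving Suc.IH[OF Suc.prems])
qed

text \<open>Pulled back to a common time \<open>N\<close>, the sets \<open>first_return_into T U E n\<close>, \<open>n < N\<close>, become
  disjoint subsets of \<open>T\<^sup>-\<^sup>N E\<close>.\<close>
lemma sum_emeasure_first_return_into_le:
  assumes U: "U \<in> sets M" and E: "E \<in> sets M"
  shows "(\<Sum>n<N. emeasure M (first_return_into T U E n)) \<le> emeasure M E"
proof -
  note G = first_return_into_in_sets[OF T_measurable U E]
  define H where "H n = (T ^^ (N - n)) -` first_return_into T U E n \<inter> space M" for n
  have H: "H n \<in> sets M" for n
    unfolding H_def using measurable_sets[OF measurable_funpow[OF T_measurable] G] .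
  have "(\<Sum>n<N. emeasure M (first_return_into T U E n)) = (\<Sum>n<N. emeasure M (H n))"
    unfolding H_def using emeasure_vimage_funpow[OF G] by simp
  also have "\<dots> = emeasure M (\<Union>n<N. H n)"
  proof (rule sum_emeasure)
    show "disjoint_family_on H {..<N}"
      unfolding disjoint_family_on_def H_def
      using first_return_into_funpow_disjoint[of _ _ N T _ U E] by (fastforce simp: neq_iff)
  qed (use H in auto)
  also have "\<dots> \<le> emeasure M ((T ^^ N) -` E \<inter> space M)"
  proof (rule emeasure_mono)
    show "(\<Union>n<N. H n) \<subseteq> (T ^^ N) -` E \<inter> space M"
    proof
      fix x assume "x \<in> (\<Union>n<N. H n)"
      then obtain n where n: "n < N" "x \<in> H n" by auto
      then have "(T ^^ n) ((T ^^ (N - n)) x) \<in> E"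
        unfolding H_def first_return_into_def by auto
      moreover have "(T ^^ n) ((T ^^ (N - n)) x) = (T ^^ N) x"
        using n(1) by (simp add: funpow_add[symmetric, THEN fun_cong, simplified])
      ultimately show "x \<in> (T ^^ N) -` E \<inter> space M" using n unfolding H_def by auto
    qed
  qed (rule measurable_sets[OF measurable_funpow[OF T_measurable] E])
  also have "\<dots> = emeasure M E" using emeasure_vimage_funpow[OF E] .
  finally show ?thesis .
qed

text \<open>The factor 2 accounts for the points that never return to \<open>U\<close>, on which \<open>induced_map T U\<close>
  is the identity; it spares us Poincare recurrence.\<close>
lemma emeasure_vimage_induced_map_le:
  assumes U: "U \<in> sets M" and E: "E \<in> sets M"
  shows "emeasure M (induced_map T U -` E \<inter> U) \<le> 2 * emeasure M E"
proof -
  note G = first_return_into_in_sets[OF T_measurable U E]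
  have "emeasure M (\<Union>n. first_return_into T U E n) \<le> (\<Sum>n. emeasure M (first_return_into T U E n))"
    using G by (intro emeasure_subadditive_countably) auto
  also have "\<dots> \<le> emeasure M E"
    unfolding suminf_eq_SUP using sum_emeasure_first_return_into_le[OF U E] by (auto intro: SUP_least)
  finally have returns: "emeasure M (\<Union>n. first_return_into T U E n) \<le> emeasure M E" .
  have "emeasure M (induced_map T U -` E \<inter> U) \<le> emeasure M (E \<union> (\<Union>n. first_return_into T U E n))"
    by (intro emeasure_mono[OF vimage_induced_map_subset]) (use G E in auto)
  also have "\<dots> \<le> emeasure M E + emeasure M (\<Union>n. first_return_into T U E n)"
    using G E by (intro emeasure_subadditive) auto
  also have "\<dots> \<le> 2 * emeasure M E"
    using returns by (simp add: mult_2 add_left_mono)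
  finally show ?thesis .
qed

lemma measure_vimage_funpow_induced_map_le:
  assumes U: "U \<in> sets M" and E: "E \<in> sets M"
  shows "measure M ((induced_map T U ^^ k) -` E \<inter> U) \<le> 2 ^ k * measure M E"
proof (induction k)
  case 0
  show ?case using U E by (simp add: finite_measure_mono)
next
  case (Suc k)
  let ?E = "(induced_map T U ^^ k) -` E \<inter> U"
  have E': "?E \<in> sets M" by (rule vimage_funpow_induced_map_Int_in_sets[OF T_measurable U E])
  have eq: "(induced_map T U ^^ Suc k) -` E \<inter> U = induced_map T U -` ?E \<inter> U"
    using induced_map_in by (auto simp: funpow_Suc_right simp del: funpow.simps)
  have "measure M (induced_map T U -` ?E \<inter> U) \<le> 2 * measure M ?E"
  proof -
    have "induced_map T U -` ?E \<inter> U \<in> sets M"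
      using vimage_funpow_induced_map_Int_in_sets[OF T_measurable U E', of 1] by simp
    then have "ennreal (measure M (induced_map T U -` ?E \<inter> U)) \<le> ennreal (2 * measure M ?E)"
      using emeasure_vimage_induced_map_le[OF U E'] E' by (simp add: emeasure_eq_measure ennreal_mult)
    then show ?thesis by (simp add: ennreal_le_iff)
  qed
  then show ?case unfolding eq power_Suc mult.assoc using Suc by linarith
qed

lemma measure_UN_vimage_funpow_induced_map_le:
  assumes U: "U \<in> sets M" and E: "E \<in> sets M"
  shows "measure M (\<Union>j\<le>K. (induced_map T U ^^ j) -` E \<inter> U) \<le> (real K + 1) * 2 ^ K * measure M E"
proof -
  have "measure M (\<Union>j\<le>K. (induced_map T U ^^ j) -` E \<inter> U)
      \<le> (\<Sum>j\<le>K. measure M ((induced_map T U ^^ j) -` E \<inter> U))"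
    using vimage_funpow_induced_map_Int_in_sets[OF T_measurable U E] by (intro measure_UNION_le) auto
  also have "\<dots> \<le> (\<Sum>j\<le>K. 2 ^ K * measure M E)"
  proof (rule sum_mono)
    fix j assume "j \<in> {..K}"
    then have "(2::real) ^ j \<le> 2 ^ K" by (intro power_increasing) auto
    then show "measure M ((induced_map T U ^^ j) -` E \<inter> U) \<le> 2 ^ K * measure M E"
      using measure_vimage_funpow_induced_map_le[OF U E, of j] by (meson measure_nonneg mult_right_mono order_trans)
  qed
  also have "\<dots> = (real K + 1) * 2 ^ K * measure M E" by (simp add: algebra_simps)
  finally show ?thesis .
qed

end

section \<open>Comparing local laws\<close>

lemma measurable_local_process:
  fixes \<psi> :: "'a \<Rightarrow> 'f::metric_space"
  assumes "compact (UNIV :: 'f set)" and "T \<in> measurable M M" and A: "A \<in> sets M"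
    and \<psi>: "\<psi> \<in> borel_measurable (restrict_space M A)"
  shows "local_process T A \<psi> \<in> borel_measurable (restrict_space M A)"
proof -
  have "induced_map T A ^^ k \<in> measurable (restrict_space M A) (restrict_space M A)" for k
    using funpow_induced_map_in
    by (intro measurable_restrict_space3[OF measurable_funpow[OF measurable_induced_map[OF assms(2) A]]]) auto
  then have "(\<lambda>x. \<psi> ((induced_map T A ^^ k) x)) \<in> borel_measurable (restrict_space M A)" for k
    using measurable_compose \<psi> by blast
  then show ?thesis unfolding local_process_def by (rule borel_measurable_nat_fun[OF assms(1)])
qed

lemma integral_local_law:
  fixes \<psi> :: "'a \<Rightarrow> 'f::metric_space" and F :: "(nat \<Rightarrow> 'f) \<Rightarrow> real"
  assumes "compact (UNIV :: 'f set)" and "T \<in> measurable M M" and "A \<in> sets M"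
    and "\<psi> \<in> borel_measurable (restrict_space M A)" and "F \<in> borel_measurable borel"
  shows "integral\<^sup>L (local_law M T A \<psi>) F = integral\<^sup>L (cond_measure M A) (\<lambda>x. F (local_process T A \<psi> x))"
proof -
  have "sets (cond_measure M A) = sets (restrict_space M A)" by (simp add: cond_measure_def)
  then have "local_process T A \<psi> \<in> measurable (cond_measure M A) borel"
    using measurable_local_process[OF assms(1-4)] measurable_cong_sets by blast
  then show ?thesis unfolding local_law_def using assms(5) by (rule integral_distr)
qed

lemma dist_local_process_le_if_avoids:
  assumes "x \<in> A \<inter> A'"
    and avoids: "\<forall>j\<le>K. (induced_map T (A \<union> A') ^^ j) x
                    \<notin> sym_diff A A' \<union> {y \<in> A \<inter> A'. dist (\<psi> y) (\<psi>' y) > \<eta>}"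
    and "k \<le> K"
  shows "dist (local_process T A \<psi> x k) (local_process T A' \<psi>' x k) \<le> \<eta>"
proof -
  let ?T\<^sub>U = "induced_map T (A \<union> A')"
  have stay: "(?T\<^sub>U ^^ j) x \<in> A \<inter> A'" and close: "dist (\<psi> ((?T\<^sub>U ^^ j) x)) (\<psi>' ((?T\<^sub>U ^^ j) x)) \<le> \<eta>"
    if "j \<le> K" for j
    using funpow_induced_map_in[where U="A \<union> A'" and T=T and k=j] assms(1) avoids that
    by (auto simp: not_less)
  have "(induced_map T A ^^ k) x = (?T\<^sub>U ^^ k) x" "(induced_map T A' ^^ k) x = (?T\<^sub>U ^^ k) x"
    using stay by (intro funpow_induced_map_eq_if_subset[OF _ _ \<open>k \<le> K\<close>]; auto)+
  then show ?thesis using close[OF \<open>k \<le> K\<close>] unfolding local_process_def by simp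
qed

lemma abs_integral_le_if_abs_le:
  fixes u h :: "'a \<Rightarrow> real"
  assumes "integrable M u" and "integrable M h" and "\<And>x. x \<in> space M \<Longrightarrow> \<bar>u x\<bar> \<le> h x"
  shows "\<bar>integral\<^sup>L M u\<bar> \<le> integral\<^sup>L M h"
  using integral_abs_bound[of M u] integral_mono[OF integrable_abs[OF assms(1)] assms(2,3)] by linarith

lemma abs_divide_diff_le:
  fixes X Y a a' r b s :: real
  assumes "a > 0" "a' > 0" "\<bar>X - Y\<bar> \<le> r" "\<bar>Y\<bar> \<le> b * a'" "\<bar>a - a'\<bar> \<le> s" "b \<ge> 0"
  shows "\<bar>X / a - Y / a'\<bar> \<le> (r + b * s) / a"
proof -
  have "X / a - Y / a' = (X - Y) / a + (Y / a') * (a' - a) / a"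
    using assms(1,2) by (simp add: field_simps)
  moreover have "\<bar>Y\<bar> * \<bar>a' - a\<bar> \<le> (b * a') * s"
    using assms(4-6) by (intro mult_mono) (auto simp: abs_minus_commute)
  then have "\<bar>(Y / a') * (a' - a)\<bar> \<le> b * s"
    using assms(2) by (simp add: abs_mult divide_le_eq mult.commute mult.left_commute)
  ultimately show ?thesis
    using assms(1,3) by (smt (verit, best) abs_divide divide_right_mono add_divide_distrib abs_of_pos)
qed

context finite_measure
begin

lemma integrable_real_indicator_finite: "A \<in> sets M \<Longrightarrow> integrable M (indicator A :: 'a \<Rightarrow> real)"
  by (simp add: less_top[symmetric])

lemma integrable_indicator_times_bounded:
  fixes f :: "'a \<Rightarrow> real"
  assumes "A \<in> sets M" and "f \<in> borel_measurable (restrict_space M A)" and "\<And>x. \<bar>f x\<bar> \<le> B"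
  shows "integrable M (\<lambda>x. indicator A x * f x)"
proof (rule integrable_const_bound[where B=B])
  show "(\<lambda>x. indicator A x * f x) \<in> borel_measurable M"
    using assms(1,2) by (subst (asm) borel_measurable_restrict_space_iff) auto
  have "B \<ge> 0" using assms(3) by (meson abs_ge_zero order_trans)
  then show "AE x in M. norm (indicator A x * f x) \<le> B"
    using assms(3) by (intro AE_I2) (auto simp: indicator_def)
qed

lemma abs_measure_diff_le_measure_sym_diff:
  assumes "A \<in> sets M" "A' \<in> sets M"
  shows "\<bar>measure M A - measure M A'\<bar> \<le> measure M (sym_diff A A')"
proof -
  have "measure M A - measure M A' \<le> measure M (sym_diff A A')"
    "measure M A' - measure M A \<le> measure M (sym_diff A A')"
    using assms by (auto intro!: order_trans[OF measure_diff_le_measure_setdiff] finite_measure_mono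
        simp: fmeasurable_eq_sets)
  then show ?thesis by linarith
qed

lemma abs_integral_indicator_diff_le:
  fixes f g :: "'a \<Rightarrow> real"
  assumes A: "A \<in> sets M" and A': "A' \<in> sets M" and E: "E \<in> sets M"
    and f: "f \<in> borel_measurable (restrict_space M A)"
    and g: "g \<in> borel_measurable (restrict_space M A')"
    and bound: "\<And>x. \<bar>f x\<bar> \<le> B" "\<And>x. \<bar>g x\<bar> \<le> B" and "\<epsilon> \<ge> 0"
    and close: "\<And>x. x \<in> A \<inter> A' - E \<Longrightarrow> \<bar>f x - g x\<bar> \<le> \<epsilon>"
  shows "\<bar>(\<integral>x. indicator A x * f x \<partial>M) - (\<integral>x. indicator A' x * g x \<partial>M)\<bar>
    \<le> B * measure M (sym_diff A A') + \<epsilon> * measure M A + 2 * B * measure M E"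
proof -
  define S where "S = sym_diff A A'"
  define h where "h x = B * indicator S x + \<epsilon> * indicator A x + 2 * B * indicator E x" for x
  have "B \<ge> 0" using bound(1) by (meson abs_ge_zero order_trans)
  have S: "S \<in> sets M" unfolding S_def using A A' by auto
  note iX = integrable_indicator_times_bounded[OF A f bound(1)]
  note iY = integrable_indicator_times_bounded[OF A' g bound(2)]
  have pointwise: "\<bar>indicator A x * f x - indicator A' x * g x\<bar> \<le> h x" for x
    using bound[of x] close[of x] \<open>B \<ge> 0\<close> \<open>\<epsilon> \<ge> 0\<close>
    by (cases "x \<in> A"; cases "x \<in> A'"; cases "x \<in> E") (auto simp: h_def S_def)
  have "(\<integral>x. indicator A x * f x \<partial>M) - (\<integral>x. indicator A' x * g x \<partial>M)
      = (\<integral>x. indicator A x * f x - indicator A' x * g x \<partial>M)"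
    using iX iY by simp
  also have "\<bar>\<dots>\<bar> \<le> integral\<^sup>L M h"
  proof (rule abs_integral_le_if_abs_le)
    show "integrable M h" unfolding h_def
      by (intro Bochner_Integration.integrable_add integrable_mult_right integrable_real_indicator_finite S A E)
  qed (use iX iY pointwise in auto)
  also have "\<dots> = B * measure M S + \<epsilon> * measure M A + 2 * B * measure M E"
    unfolding h_def using S A E by (simp add: integrable_real_indicator_finite)
  finally show ?thesis unfolding S_def .
qed

end

lemma abs_cond_integral_diff_le:
  fixes f g :: "'a \<Rightarrow> real"
  assumes "finite_measure M" and A: "A \<in> sets M" and A': "A' \<in> sets M" and E: "E \<in> sets M"
    and pos: "measure M A > 0" "measure M A' > 0"
    and f: "f \<in> borel_measurable (restrict_space M A)"
    and g: "g \<in> borel_measurable (restrict_space M A')"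
    and bound: "\<And>x. \<bar>f x\<bar> \<le> B" "\<And>x. \<bar>g x\<bar> \<le> B" and "\<epsilon> \<ge> 0"
    and close: "\<And>x. x \<in> A \<inter> A' - E \<Longrightarrow> \<bar>f x - g x\<bar> \<le> \<epsilon>"
  shows "\<bar>integral\<^sup>L (cond_measure M A) f - integral\<^sup>L (cond_measure M A') g\<bar>
    \<le> \<epsilon> + 2 * B * (measure M (sym_diff A A') + measure M E) / measure M A"
proof -
  interpret finite_measure M by fact
  define X where "X = (\<integral>x. indicator A x * f x \<partial>M)"
  define Y where "Y = (\<integral>x. indicator A' x * g x \<partial>M)"
  have "B \<ge> 0" using bound(1) by (meson abs_ge_zero order_trans)
  have "\<bar>Y\<bar> \<le> (\<integral>x. B * indicator A' x \<partial>M)"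
    unfolding Y_def
    using integrable_indicator_times_bounded[OF A' g bound(2)]
      integrable_mult_right[OF integrable_real_indicator_finite[OF A'], of B] bound(2)
    by (intro abs_integral_le_if_abs_le) (auto simp: indicator_def)
  then have "\<bar>Y\<bar> \<le> B * measure M A'" using A' by simp
  from abs_divide_diff_le[OF pos
      abs_integral_indicator_diff_le[OF A A' E f g bound \<open>\<epsilon> \<ge> 0\<close> close, folded X_def Y_def]
      this abs_measure_diff_le_measure_sym_diff[OF A A'] \<open>B \<ge> 0\<close>]
  have "\<bar>X / measure M A - Y / measure M A'\<bar>
      \<le> \<epsilon> + 2 * B * (measure M (sym_diff A A') + measure M E) / measure M A"
    using pos by (simp add: field_simps)
  then show ?thesis
    unfolding X_def Y_def
    using integral_cond_measure[OF \<open>finite_measure M\<close> A pos(1) f]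
      integral_cond_measure[OF \<open>finite_measure M\<close> A' pos(2) g] by simp
qed

context mpt
begin

lemma abs_integral_local_law_diff_le_measure_exceptional:
  fixes \<psi> \<psi>' :: "'a \<Rightarrow> 'f::metric_space" and F :: "(nat \<Rightarrow> 'f) \<Rightarrow> real"
  assumes compact: "compact (UNIV :: 'f set)"
    and A: "A \<in> sets M" and A': "A' \<in> sets M" and pos: "measure M A > 0" "measure M A' > 0"
    and \<psi>: "\<psi> \<in> borel_measurable (restrict_space M A)"
    and \<psi>': "\<psi>' \<in> borel_measurable (restrict_space M A')"
    and F: "F \<in> borel_measurable borel" and bound: "\<And>y. \<bar>F y\<bar> \<le> B" and "\<epsilon> \<ge> 0"
    and modulus: "\<And>y z. (\<forall>k\<le>K. dist (y k) (z k) \<le> \<eta>) \<Longrightarrow> \<bar>F y - F z\<bar> \<le> \<epsilon>"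
  defines "E \<equiv> sym_diff A A' \<union> {x \<in> A \<inter> A'. dist (\<psi> x) (\<psi>' x) > \<eta>}"
  shows "\<bar>integral\<^sup>L (local_law M T A \<psi>) F - integral\<^sup>L (local_law M T A' \<psi>') F\<bar>
    \<le> \<epsilon> + 2 * B * (measure M (sym_diff A A')
        + measure M (\<Union>j\<le>K. (induced_map T (A \<union> A') ^^ j) -` E \<inter> (A \<union> A'))) / measure M A"
proof -
  define bad where "bad = (\<Union>j\<le>K. (induced_map T (A \<union> A') ^^ j) -` E \<inter> (A \<union> A'))"
  have "{x \<in> A \<inter> A'. dist (\<psi> x) (\<psi>' x) > \<eta>} \<in> sets M"
    using A A' measurable_restrict_mono[OF \<psi>] measurable_restrict_mono[OF \<psi>']
    by (intro dist_gt_in_sets[OF compact]) auto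
  then have "E \<in> sets M" unfolding E_def using A A' by auto
  then have bad: "bad \<in> sets M"
    unfolding bad_def using A A'
    by (intro sets.finite_UN finite_atMost vimage_funpow_induced_map_Int_in_sets[OF T_measurable]) auto
  have "\<bar>F (local_process T A \<psi> x) - F (local_process T A' \<psi>' x)\<bar> \<le> \<epsilon>"
    if x: "x \<in> A \<inter> A' - bad" for x
  proof (intro modulus allI impI)
    fix k assume "k \<le> K"
    from x have "\<forall>j\<le>K. (induced_map T (A \<union> A') ^^ j) x \<notin> E" unfolding bad_def by auto
    with x \<open>k \<le> K\<close> show "dist (local_process T A \<psi> x k) (local_process T A' \<psi>' x k) \<le> \<eta>"
      unfolding E_def by (intro dist_local_process_le_if_avoids) auto
  qed
  then have "\<bar>integral\<^sup>L (cond_measure M A) (\<lambda>x. F (local_process T A \<psi> x))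
        - integral\<^sup>L (cond_measure M A') (\<lambda>x. F (local_process T A' \<psi>' x))\<bar>
      \<le> \<epsilon> + 2 * B * (measure M (sym_diff A A') + measure M bad) / measure M A"
    using measurable_compose[OF measurable_local_process[OF compact T_measurable A \<psi>] F]
      measurable_compose[OF measurable_local_process[OF compact T_measurable A' \<psi>'] F]
    by (intro abs_cond_integral_diff_le[OF finite_measure_axioms A A' bad pos] bound \<open>\<epsilon> \<ge> 0\<close>)
  then show ?thesis
    unfolding bad_def
    using integral_local_law[OF compact T_measurable A \<psi> F] integral_local_law[OF compact T_measurable A' \<psi>' F]
    by simp
qed

lemma abs_integral_local_law_diff_le:
  fixes \<psi> \<psi>' :: "'a \<Rightarrow> 'f::metric_space" and F :: "(nat \<Rightarrow> 'f) \<Rightarrow> real"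
  assumes compact: "compact (UNIV :: 'f set)"
    and A: "A \<in> sets M" and A': "A' \<in> sets M" and pos: "measure M A > 0" "measure M A' > 0"
    and \<psi>: "\<psi> \<in> borel_measurable (restrict_space M A)"
    and \<psi>': "\<psi>' \<in> borel_measurable (restrict_space M A')"
    and F: "F \<in> borel_measurable borel" and bound: "\<And>y. \<bar>F y\<bar> \<le> B" and "\<epsilon> \<ge> 0"
    and modulus: "\<And>y z. (\<forall>k\<le>K. dist (y k) (z k) \<le> \<eta>) \<Longrightarrow> \<bar>F y - F z\<bar> \<le> \<epsilon>"
  defines "s \<equiv> measure M (sym_diff A A') / measure M A"
    and "p \<equiv> measure (cond_measure M (A \<inter> A')) {x \<in> A \<inter> A'. dist (\<psi> x) (\<psi>' x) > \<eta>}"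
  shows "\<bar>integral\<^sup>L (local_law M T A \<psi>) F - integral\<^sup>L (local_law M T A' \<psi>') F\<bar>
    \<le> \<epsilon> + 2 * B * (s + (real K + 1) * 2 ^ K * (s + p))"
proof -
  define S where "S = sym_diff A A'"
  define D where "D = {x \<in> A \<inter> A'. dist (\<psi> x) (\<psi>' x) > \<eta>}"
  define bad where "bad = (\<Union>j\<le>K. (induced_map T (A \<union> A') ^^ j) -` (S \<union> D) \<inter> (A \<union> A'))"
  define C where "C = (real K + 1) * 2 ^ K"
  have S: "S \<in> sets M" unfolding S_def using A A' by auto
  have D: "D \<in> sets M"
    unfolding D_def using A A' measurable_restrict_mono[OF \<psi>] measurable_restrict_mono[OF \<psi>']
    by (intro dist_gt_in_sets[OF compact]) auto
  have "measure M bad \<le> C * measure M (S \<union> D)"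
    unfolding bad_def C_def using A A' S D by (intro measure_UN_vimage_funpow_induced_map_le) auto
  also have "\<dots> \<le> C * (measure M S + measure M D)"
    unfolding C_def using S D by (intro mult_left_mono measure_Un_le) auto
  also have "\<dots> \<le> C * (measure M S + p * measure M A)"
    using measure_divide_le_measure_cond_measure[OF finite_measure_axioms A _ D _ _ pos(1), of "A \<inter> A'"]
      A A' pos(1) unfolding p_def D_def C_def by (intro mult_left_mono add_left_mono) (auto simp: field_simps)
  finally have "(measure M S + measure M bad) / measure M A
      \<le> (measure M S + C * (measure M S + p * measure M A)) / measure M A"
    using pos(1) by (intro divide_right_mono) auto
  also have "\<dots> = s + C * (s + p)"
    using pos(1) unfolding s_def S_def by (simp add: field_simps)
  finally have "2 * B * ((measure M S + measure M bad) / measure M A) \<le> 2 * B * (s + C * (s + p))"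
    using bound by (intro mult_left_mono) (auto intro: order_trans[OF abs_ge_zero])
  moreover have "\<bar>integral\<^sup>L (local_law M T A \<psi>) F - integral\<^sup>L (local_law M T A' \<psi>') F\<bar>
      \<le> \<epsilon> + 2 * B * (measure M S + measure M bad) / measure M A"
    unfolding S_def D_def bad_def
    by (rule abs_integral_local_law_diff_le_measure_exceptional[OF compact A A' pos \<psi> \<psi>' F bound \<open>\<epsilon> \<ge> 0\<close>])
      (rule modulus)
  ultimately show ?thesis unfolding C_def by simp
qed

end

lemma (in mpt) integral_local_law_diff_tendsto_0:
  fixes A A' :: "nat \<Rightarrow> 'a set" and \<psi> \<psi>' :: "nat \<Rightarrow> 'a \<Rightarrow> 'f::metric_space"
    and F :: "(nat \<Rightarrow> 'f) \<Rightarrow> real"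
  assumes compact: "compact (UNIV :: 'f set)"
    and A: "\<And>l. A l \<in> sets M" and A': "\<And>l. A' l \<in> sets M"
    and pos: "\<And>l. measure M (A l) > 0" "\<And>l. measure M (A' l) > 0"
    and obs: "\<And>l. \<psi> l \<in> borel_measurable (restrict_space M (A l))"
    and obs': "\<And>l. \<psi>' l \<in> borel_measurable (restrict_space M (A' l))"
    and symdiff: "(\<lambda>l. measure M (sym_diff (A l) (A' l)) / measure M (A l)) \<longlonglongrightarrow> 0"
    and inprob: "\<And>\<eta>. \<eta> > 0 \<Longrightarrow>
       (\<lambda>l. measure (cond_measure M (A l \<inter> A' l)) {x \<in> A l \<inter> A' l. dist (\<psi> l x) (\<psi>' l x) > \<eta>}) \<longlonglongrightarrow> 0"
    and F: "continuous_on UNIV F" "bounded (range F)"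
  shows "(\<lambda>l. integral\<^sup>L (local_law M T (A l) (\<psi> l)) F - integral\<^sup>L (local_law M T (A' l) (\<psi>' l)) F) \<longlonglongrightarrow> 0"
proof (rule LIMSEQ_I)
  fix r :: real assume "r > 0"
  obtain B where B: "\<And>y. \<bar>F y\<bar> \<le> B" using F(2) unfolding bounded_iff by auto
  obtain \<eta> K where "\<eta> > 0" and modulus: "\<And>y z. (\<forall>k\<le>K. dist (y k) (z k) \<le> \<eta>) \<Longrightarrow> \<bar>F y - F z\<bar> < r / 2"
    using uniformly_continuous_initial_coordinates[OF compact F(1)] \<open>r > 0\<close> half_gt_zero by metis
  define C where "C = (real K + 1) * 2 ^ K"
  define R where "R l = 2 * B * (measure M (sym_diff (A l) (A' l)) / measure M (A l) + C *
      (measure M (sym_diff (A l) (A' l)) / measure M (A l)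
        + measure (cond_measure M (A l \<inter> A' l)) {x \<in> A l \<inter> A' l. dist (\<psi> l x) (\<psi>' l x) > \<eta>}))" for l
  have "R \<longlonglongrightarrow> 2 * B * (0 + C * (0 + 0))"
    unfolding R_def by (intro tendsto_intros symdiff inprob \<open>\<eta> > 0\<close>)
  then have "R \<longlonglongrightarrow> 0" by simp
  from LIMSEQ_D[OF this, of "r / 2"] \<open>r > 0\<close> obtain N where N: "\<forall>l\<ge>N. \<bar>R l\<bar> < r / 2" by auto
  have est: "\<bar>integral\<^sup>L (local_law M T (A l) (\<psi> l)) F - integral\<^sup>L (local_law M T (A' l) (\<psi>' l)) F\<bar>
      \<le> r / 2 + R l" for l
    using abs_integral_local_law_diff_le[OF compact A A' pos obs obs'
        borel_measurable_continuous_onI[OF F(1)] B _ less_imp_le[OF modulus]] \<open>r > 0\<close>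
    unfolding R_def C_def by simp
  show "\<exists>N. \<forall>l\<ge>N. norm (integral\<^sup>L (local_law M T (A l) (\<psi> l)) F
      - integral\<^sup>L (local_law M T (A' l) (\<psi>' l)) F - 0) < r"
  proof (intro exI allI impI)
    fix l assume "N \<le> l"
    with N have "\<bar>R l\<bar> < r / 2" by blast
    with est[of l] show "norm (integral\<^sup>L (local_law M T (A l) (\<psi> l)) F
        - integral\<^sup>L (local_law M T (A' l) (\<psi>' l)) F - 0) < r"
      unfolding real_norm_def diff_zero by linarith
  qed
qed

lemma weak_conv_to_iff_if_integral_diff_tendsto_0:
  fixes Ps Qs :: "nat \<Rightarrow> 'b::topological_space measure"
  assumes "\<And>f :: 'b \<Rightarrow> real. continuous_on UNIV f \<Longrightarrow> bounded (range f) \<Longrightarrow>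
      (\<lambda>n. integral\<^sup>L (Ps n) f - integral\<^sup>L (Qs n) f) \<longlonglongrightarrow> 0"
  shows "weak_conv_to Ps P \<longleftrightarrow> weak_conv_to Qs P"
  unfolding weak_conv_to_def
proof (intro iffI allI impI)
  fix f :: "'b \<Rightarrow> real"
  assume Ps: "\<forall>f :: 'b \<Rightarrow> real. continuous_on UNIV f \<and> bounded (range f) \<longrightarrow> (\<lambda>n. integral\<^sup>L (Ps n) f) \<longlonglongrightarrow> integral\<^sup>L P f"
    and f: "continuous_on UNIV f \<and> bounded (range f)"
  from Lim_transform2[OF Ps[rule_format, OF f] assms] f
  show "(\<lambda>n. integral\<^sup>L (Qs n) f) \<longlonglongrightarrow> integral\<^sup>L P f" by blast
next
  fix f :: "'b \<Rightarrow> real"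
  assume Qs: "\<forall>f :: 'b \<Rightarrow> real. continuous_on UNIV f \<and> bounded (range f) \<longrightarrow> (\<lambda>n. integral\<^sup>L (Qs n) f) \<longlonglongrightarrow> integral\<^sup>L P f"
    and f: "continuous_on UNIV f \<and> bounded (range f)"
  from Lim_transform[OF Qs[rule_format, OF f] assms] f
  show "(\<lambda>n. integral\<^sup>L (Ps n) f) \<longlonglongrightarrow> integral\<^sup>L P f" by blast
qed

theorem mainTheorem7:
  fixes M :: "'a measure" and T :: "'a \<Rightarrow> 'a"
    and A A' :: "nat \<Rightarrow> 'a set"
    and \<psi> \<psi>' :: "nat \<Rightarrow> 'a \<Rightarrow> 'f::metric_space"
    and P :: "(nat \<Rightarrow> 'f) measure"
  assumes compactF: "compact (UNIV :: 'f set)"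
    and erg: "ergodic_pps M T"
    and rareA: "asymptotically_rare M A"
    and rareA': "asymptotically_rare M A'"
    and obs: "\<And>l. \<psi> l \<in> borel_measurable (restrict_space M (A l))"
    and obs': "\<And>l. \<psi>' l \<in> borel_measurable (restrict_space M (A' l))"
    and symdiff: "(\<lambda>l. measure M ((A l - A' l) \<union> (A' l - A l)) / measure M (A l))
                    \<longlonglongrightarrow> 0"
    and inprob: "\<And>\<epsilon>. \<epsilon> > 0 \<Longrightarrow>
       (\<lambda>l. measure (cond_measure M (A l \<inter> A' l))
              {x \<in> A l \<inter> A' l. dist (\<psi> l x) (\<psi>' l x) > \<epsilon>}) \<longlonglongrightarrow> 0"
    and P_prob: "prob_space P" and P_sets: "sets P = sets borel"
  shows "weak_conv_to (\<lambda>l. local_law M T (A l) (\<psi> l)) P \<longleftrightarrow>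
         weak_conv_to (\<lambda>l. local_law M T (A' l) (\<psi>' l)) P"
proof (rule weak_conv_to_iff_if_integral_diff_tendsto_0)
  interpret mpt M T using mpt_if_ergodic_pps[OF erg] .
  fix F :: "(nat \<Rightarrow> 'f) \<Rightarrow> real"
  assume "continuous_on UNIV F" "bounded (range F)"
  moreover have "A l \<in> sets M" "A' l \<in> sets M" "measure M (A l) > 0" "measure M (A' l) > 0" for l
    using rareA rareA' unfolding asymptotically_rare_def by auto
  ultimately show "(\<lambda>l. integral\<^sup>L (local_law M T (A l) (\<psi> l)) F
      - integral\<^sup>L (local_law M T (A' l) (\<psi>' l)) F) \<longlonglongrightarrow> 0"
    by (intro integral_local_law_diff_tendsto_0[OF compactF _ _ _ _ obs obs' symdiff inprob])
qed

end
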